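(* Let $K_{m_1,m_2}$ be the complete bipartite graph with bipartition $(X,Y)$, $|X|=m_1$, $|Y|=m_2$, where $2\le m_1\le m_2$. If $S\subseteq X$ and $|S|\ge 2$, then $\kappa^*_{K_{m_1,m_2}}(S)=m_2$. If $S\subseteq Y$ and $|S|\ge 2$, then $\kappa^*_{K_{m_1,m_2}}(S)=m_1$.
   Context: For $S\subseteq V(G)$ with $|S|\ge 2$, an $S$-Steiner tree of $G$ is a subtree $T$ of $G$ with $S\subseteq V(T)$ all of whose leaves belong to $S$. A family of $S$-Steiner trees $T_1,\dots,T_k$ is completely independent if for all $1\le p<q\le k$: $E(T_p)\cap E(T_q)=\emptyset$, $V(T_p)\cap V(T_q)=S$, and for any two vertices $x_1,x_2\in S$ the $(x_1,x_2)$-paths in $T_p$ and in $T_q$ are internally disjoint. $\kappa^*_G(S)$ is the maximum number of trees in a completely independent family of $S$-Steiner trees in $G$. *)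

theory Defs
  imports Main
begin

type_synonym 'a graph = "'a set \<times> 'a set set"

definition verts :: "'a graph \<Rightarrow> 'a set" where "verts G = fst G"
definition edges :: "'a graph \<Rightarrow> 'a set set" where "edges G = snd G"

definition is_graph :: "'a graph \<Rightarrow> bool" where
  "is_graph G \<longleftrightarrow> (\<forall>e\<in>edges G. \<exists>u v. e = {u, v} \<and> u \<noteq> v \<and> u \<in> verts G \<and> v \<in> verts G)"

definition is_path :: "'a graph \<Rightarrow> 'a list \<Rightarrow> bool" where
  "is_path G xs \<longleftrightarrow> xs \<noteq> [] \<and> distinct xs \<and> set xs \<subseteq> verts G \<and>
     (\<forall>i. Suc i < length xs \<longrightarrow> {xs ! i, xs ! Suc i} \<in> edges G)"

definition is_path_between :: "'a graph \<Rightarrow> 'a \<Rightarrow> 'a \<Rightarrow> 'a list \<Rightarrow> bool" where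
  "is_path_between G u v xs \<longleftrightarrow> is_path G xs \<and> hd xs = u \<and> last xs = v"

definition internal_verts :: "'a list \<Rightarrow> 'a set" where
  "internal_verts xs = set (butlast (tl xs))"

definition connected_graph :: "'a graph \<Rightarrow> bool" where
  "connected_graph G \<longleftrightarrow> verts G \<noteq> {} \<and>
     (\<forall>u\<in>verts G. \<forall>v\<in>verts G. \<exists>xs. is_path_between G u v xs)"

definition is_cycle :: "'a graph \<Rightarrow> 'a list \<Rightarrow> bool" where
  "is_cycle G xs \<longleftrightarrow> is_path G xs \<and> length xs \<ge> 3 \<and> {last xs, hd xs} \<in> edges G"

definition is_tree :: "'a graph \<Rightarrow> bool" where
  "is_tree T \<longleftrightarrow> is_graph T \<and> finite (verts T) \<and> connected_graph T \<and> \<not> (\<exists>xs. is_cycle T xs)"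

definition subgraph :: "'a graph \<Rightarrow> 'a graph \<Rightarrow> bool" where
  "subgraph H G \<longleftrightarrow> is_graph H \<and> verts H \<subseteq> verts G \<and> edges H \<subseteq> edges G"

definition degree :: "'a graph \<Rightarrow> 'a \<Rightarrow> nat" where
  "degree G v = card {e \<in> edges G. v \<in> e}"

definition leaves :: "'a graph \<Rightarrow> 'a set" where
  "leaves T = {v \<in> verts T. degree T v = 1}"

definition steiner_tree :: "'a graph \<Rightarrow> 'a set \<Rightarrow> 'a graph \<Rightarrow> bool" where
  "steiner_tree G S T \<longleftrightarrow> subgraph T G \<and> is_tree T \<and> S \<subseteq> verts T \<and> leaves T \<subseteq> S"

definition CIST_family :: "'a graph \<Rightarrow> 'a set \<Rightarrow> (nat \<Rightarrow> 'a graph) \<Rightarrow> nat \<Rightarrow> bool" where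
  "CIST_family G S T k \<longleftrightarrow>
     (\<forall>i<k. steiner_tree G S (T i)) \<and>
     (\<forall>p<k. \<forall>q<k. p \<noteq> q \<longrightarrow>
        edges (T p) \<inter> edges (T q) = {} \<and>
        verts (T p) \<inter> verts (T q) = S \<and>
        (\<forall>x1\<in>S. \<forall>x2\<in>S. \<forall>P Q. is_path_between (T p) x1 x2 P \<longrightarrow>
            is_path_between (T q) x1 x2 Q \<longrightarrow> internal_verts P \<inter> internal_verts Q = {}))"

definition kappa_star :: "'a graph \<Rightarrow> 'a set \<Rightarrow> nat" where
  "kappa_star G S = (GREATEST k. \<exists>T. CIST_family G S T k)"

definition complete_bipartite :: "'a set \<Rightarrow> 'a set \<Rightarrow> 'a graph" where
  "complete_bipartite X Y = (X \<union> Y, {{x, y} | x y. x \<in> X \<and> y \<in> Y})"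

end

theory Submission
  imports Defs
begin

text \<open>For \<open>S \<subseteq> X\<close>, the stars joining \<open>S\<close> to a single vertex \<open>y \<in> Y\<close> form a completely
  independent family of size \<open>|Y|\<close>: two of them share exactly \<open>S\<close>, and the only internal vertex
  of a path in a star is its centre. Conversely, \<open>S\<close> is independent, so every \<open>S\<close>-Steiner tree
  uses an edge leaving \<open>S\<close>, hence a vertex of \<open>Y\<close>; as the trees of a family share only \<open>S\<close>,
  they use distinct vertices of \<open>Y\<close>. The case \<open>S \<subseteq> Y\<close> is symmetric.\<close>

lemma is_path_Cons:
  "is_path G (u # xs) \<longleftrightarrow>
     u \<in> verts G \<and> u \<notin> set xs \<and> (xs = [] \<or> is_path G xs \<and> {u, hd xs} \<in> edges G)"
proof (cases xs)
  case (Cons v ys)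
  have "(\<forall>i. Suc i < length (u # xs) \<longrightarrow> {(u # xs) ! i, (u # xs) ! Suc i} \<in> edges G) \<longleftrightarrow>
        {u, v} \<in> edges G \<and> (\<forall>i. Suc i < length xs \<longrightarrow> {xs ! i, xs ! Suc i} \<in> edges G)"
    using Cons by (auto simp: less_Suc_eq_0_disj All_less_Suc2)
  then show ?thesis using Cons by (auto simp: is_path_def)
qed (simp add: is_path_def)

lemma internal_verts_conv_nth:
  "v \<in> internal_verts xs \<longleftrightarrow> (\<exists>i. 0 < i \<and> Suc i < length xs \<and> v = xs ! i)"
proof
  assume "v \<in> internal_verts xs"
  then obtain j where "j < length (butlast (tl xs))" "v = butlast (tl xs) ! j"
    unfolding internal_verts_def by (auto simp: in_set_conv_nth)
  then show "\<exists>i. 0 < i \<and> Suc i < length xs \<and> v = xs ! i"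
    by (intro exI[of _ "Suc j"]) (simp add: nth_butlast nth_tl)
next
  assume "\<exists>i. 0 < i \<and> Suc i < length xs \<and> v = xs ! i"
  then obtain i where "0 < i" "Suc i < length xs" "v = xs ! i" by blast
  then show "v \<in> internal_verts xs"
    unfolding internal_verts_def in_set_conv_nth
    by (intro exI[of _ "i - 1"]) (simp add: nth_butlast nth_tl)
qed

lemma internal_verts_subset_centre:
  assumes "is_path G P" and centre: "\<And>e. e \<in> edges G \<Longrightarrow> c \<in> e"
  shows "internal_verts P \<subseteq> {c}"
proof
  fix v assume "v \<in> internal_verts P"
  then obtain i where i: "0 < i" "Suc i < length P" and v: "v = P ! i"
    by (auto simp: internal_verts_conv_nth)
  have edge: "{P ! j, P ! Suc j} \<in> edges G" if "Suc j < length P" for j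
    using assms(1) that by (simp add: is_path_def)
  have "{P ! (i - 1), P ! i} \<in> edges G" "{P ! i, P ! Suc i} \<in> edges G"
    using edge[of "i - 1"] edge[of i] i by simp_all
  then have "c \<in> {P ! (i - 1), P ! i}" "c \<in> {P ! i, P ! Suc i}" using centre by blast+
  moreover have "P ! (i - 1) \<noteq> P ! Suc i"
    using assms(1) i by (simp add: is_path_def nth_eq_iff_index_eq)
  ultimately show "v \<in> {c}" using v by auto
qed

lemma not_is_cycle_centre:
  assumes centre: "\<And>e. e \<in> edges G \<Longrightarrow> c \<in> e"
  shows "\<not> is_cycle G xs"
proof
  assume "is_cycle G xs"
  then have path: "is_path G xs" and len: "3 \<le> length xs"
    and closing: "{last xs, hd xs} \<in> edges G"
    by (simp_all add: is_cycle_def)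
  have "xs ! 1 \<in> internal_verts xs"
    using len by (auto simp: internal_verts_conv_nth)
  then have "xs ! 1 = c" using internal_verts_subset_centre[OF path centre] by blast
  moreover have "hd xs = xs ! 0" "last xs = xs ! (length xs - 1)"
    using len by (simp_all add: hd_conv_nth last_conv_nth flip: length_greater_0_conv)
  moreover have "xs ! 0 \<noteq> xs ! 1" "xs ! (length xs - 1) \<noteq> xs ! 1"
    using path len by (simp_all add: is_path_def nth_eq_iff_index_eq)
  ultimately show False using centre[OF closing] by auto
qed

definition star_graph :: "'a set \<Rightarrow> 'a \<Rightarrow> 'a graph" where
  "star_graph S c = (insert c S, (\<lambda>s. {s, c}) ` S)"

lemma verts_star_graph [simp]: "verts (star_graph S c) = insert c S"
  by (simp add: star_graph_def verts_def)

lemma edges_star_graph [simp]: "edges (star_graph S c) = (\<lambda>s. {s, c}) ` S"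
  by (simp add: star_graph_def edges_def)

lemma internal_verts_star_graph:
  "is_path (star_graph S c) P \<Longrightarrow> internal_verts P \<subseteq> {c}"
  by (rule internal_verts_subset_centre) auto

lemma connected_star_graph: "connected_graph (star_graph S c)"
  unfolding connected_graph_def
proof (intro conjI ballI)
  fix u v assume u: "u \<in> verts (star_graph S c)" and v: "v \<in> verts (star_graph S c)"
  show "\<exists>xs. is_path_between (star_graph S c) u v xs"
  proof (cases "u = v")
    case True
    then show ?thesis using u
      by (auto simp: is_path_between_def is_path_Cons intro!: exI[of _ "[u]"])
  next
    case False
    consider "u = c" | "v = c" | "u \<noteq> c" "v \<noteq> c" by blast
    then show ?thesis
    proof cases
      case 1
      then show ?thesis using v False
        by (auto simp: is_path_between_def is_path_Cons insert_commute intro!: exI[of _ "[u, v]"])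
    next
      case 2
      then show ?thesis using u False
        by (auto simp: is_path_between_def is_path_Cons intro!: exI[of _ "[u, v]"])
    next
      case 3
      then show ?thesis using u v False
        by (auto simp: is_path_between_def is_path_Cons insert_commute
            intro!: exI[of _ "[u, c, v]"])
    qed
  qed
qed simp

lemma is_tree_star_graph:
  assumes "c \<notin> S" "finite S"
  shows "is_tree (star_graph S c)"
proof -
  have "is_graph (star_graph S c)"
    using assms(1) by (auto simp: is_graph_def)
  moreover have "\<not> is_cycle (star_graph S c) xs" for xs
    by (rule not_is_cycle_centre) auto
  ultimately show ?thesis
    using assms(2) connected_star_graph by (simp add: is_tree_def)
qed

lemma degree_star_graph_centre: "degree (star_graph S c) c = card S"
proof -
  have "{e \<in> edges (star_graph S c). c \<in> e} = (\<lambda>s. {s, c}) ` S" by auto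
  moreover have "inj_on (\<lambda>s. {s, c}) S" by (auto simp: inj_on_def doubleton_eq_iff)
  ultimately show ?thesis by (simp add: degree_def card_image)
qed

lemma leaves_star_graph: "2 \<le> card S \<Longrightarrow> leaves (star_graph S c) \<subseteq> S"
  using degree_star_graph_centre[of S c] by (auto simp: leaves_def)

lemma steiner_tree_star_graph:
  assumes "c \<notin> S" "2 \<le> card S" "insert c S \<subseteq> verts G" "\<And>s. s \<in> S \<Longrightarrow> {s, c} \<in> edges G"
  shows "steiner_tree G S (star_graph S c)"
proof -
  have "finite S" using assms(2) by (metis card.infinite not_numeral_le_zero)
  then have "is_tree (star_graph S c)" by (rule is_tree_star_graph[OF assms(1)])
  then show ?thesis
    using assms leaves_star_graph[OF assms(2)]
    by (auto simp: steiner_tree_def subgraph_def is_tree_def)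
qed

lemma CIST_family_star_graphs:
  assumes "finite C" "C \<inter> S = {}" "2 \<le> card S" "S \<union> C \<subseteq> verts G"
    and "\<And>s c. s \<in> S \<Longrightarrow> c \<in> C \<Longrightarrow> {s, c} \<in> edges G"
  shows "\<exists>T. CIST_family G S T (card C)"
proof -
  obtain h where h: "bij_betw h {0..<card C} C"
    using ex_bij_betw_nat_finite[OF assms(1)] ..
  have hC: "h i \<in> C" if "i < card C" for i
    using h that by (auto dest: bij_betw_apply)
  have h_inj: "h p \<noteq> h q" if "p < card C" "q < card C" "p \<noteq> q" for p q
    using h that by (auto simp: bij_betw_def inj_on_def)
  have "CIST_family G S (\<lambda>i. star_graph S (h i)) (card C)"
    unfolding CIST_family_def
  proof (intro conjI allI impI ballI)
    fix i assume "i < card C"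
    then show "steiner_tree G S (star_graph S (h i))"
      using assms hC by (intro steiner_tree_star_graph) auto
  next
    fix p q assume "p < card C" "q < card C" "p \<noteq> q"
    then have ne: "h p \<noteq> h q" and out: "h p \<notin> S" "h q \<notin> S"
      using h_inj hC assms(2) by auto
    then show "edges (star_graph S (h p)) \<inter> edges (star_graph S (h q)) = {}"
      by (auto simp: doubleton_eq_iff)
    show "verts (star_graph S (h p)) \<inter> verts (star_graph S (h q)) = S"
      using ne out by auto
    fix x1 x2 P Q
    assume "is_path_between (star_graph S (h p)) x1 x2 P"
      and "is_path_between (star_graph S (h q)) x1 x2 Q"
    then have "internal_verts P \<subseteq> {h p}" "internal_verts Q \<subseteq> {h q}"
      by (auto simp: is_path_between_def dest: internal_verts_star_graph)
    then show "internal_verts P \<inter> internal_verts Q = {}" using ne by auto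
  qed
  then show ?thesis by blast
qed

lemma CIST_family_le_card:
  assumes family: "CIST_family G S T k" and "finite N" "N \<inter> S = {}"
    and meets: "\<And>i. i < k \<Longrightarrow> verts (T i) \<inter> N \<noteq> {}"
  shows "k \<le> card N"
proof -
  define f where "f i = (SOME v. v \<in> verts (T i) \<inter> N)" for i
  have f: "f i \<in> verts (T i) \<inter> N" if "i < k" for i
    unfolding f_def by (rule someI_ex) (use meets[OF that] in blast)
  have "inj_on f {..<k}"
  proof (rule inj_onI, rule ccontr)
    fix p q assume "p \<in> {..<k}" "q \<in> {..<k}" "f p = f q" "p \<noteq> q"
    moreover from this have "verts (T p) \<inter> verts (T q) = S"
      using family by (simp add: CIST_family_def)
    ultimately show False using f[of p] f[of q] \<open>N \<inter> S = {}\<close> by auto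
  qed
  moreover have "f ` {..<k} \<subseteq> N" using f by auto
  ultimately show ?thesis
    using card_inj_on_le[OF _ _ \<open>finite N\<close>] by fastforce
qed

lemma steiner_tree_meets_neighbour:
  assumes tree: "steiner_tree G S T" and "2 \<le> card S"
    and independent: "\<And>s s'. s \<in> S \<Longrightarrow> s' \<in> S \<Longrightarrow> {s, s'} \<notin> edges G"
  shows "\<exists>s\<in>S. \<exists>v\<in>verts T - S. {s, v} \<in> edges G"
proof -
  obtain a b where ab: "a \<in> S" "b \<in> S" "a \<noteq> b"
    using \<open>2 \<le> card S\<close>
    by (metis card.infinite card_le_Suc0_iff_eq not_less_eq_eq numeral_2_eq_2 zero_le)
  moreover have "connected_graph T" "S \<subseteq> verts T"
    using tree by (simp_all add: steiner_tree_def is_tree_def)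
  ultimately obtain xs where xs: "is_path_between T a b xs"
    unfolding connected_graph_def by blast
  then obtain v ys where "xs = a # v # ys"
    using ab by (cases xs rule: remdups_adj.cases) (auto simp: is_path_between_def is_path_def)
  then have "{a, v} \<in> edges T" "v \<in> verts T"
    using xs by (simp_all add: is_path_between_def is_path_Cons)
  moreover have "edges T \<subseteq> edges G"
    using tree by (simp add: steiner_tree_def subgraph_def)
  ultimately show ?thesis
    using ab independent by blast
qed

lemma edges_complete_bipartite_iff:
  assumes "X \<inter> Y = {}" "x \<in> X"
  shows "{x, v} \<in> edges (complete_bipartite X Y) \<longleftrightarrow> v \<in> Y"
  using assms by (auto simp: complete_bipartite_def edges_def doubleton_eq_iff)

lemma complete_bipartite_commute: "complete_bipartite X Y = complete_bipartite Y X"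
  by (auto simp: complete_bipartite_def insert_commute)

lemma kappa_star_complete_bipartite:
  assumes "X \<inter> Y = {}" "S \<subseteq> X" "2 \<le> card S" "finite Y"
  shows "kappa_star (complete_bipartite X Y) S = card Y"
  unfolding kappa_star_def
proof (rule Greatest_equality)
  have "S \<union> Y \<subseteq> verts (complete_bipartite X Y)"
    using assms(2) by (auto simp: complete_bipartite_def verts_def)
  then show "\<exists>T. CIST_family (complete_bipartite X Y) S T (card Y)"
    using assms by (intro CIST_family_star_graphs) (auto simp: edges_complete_bipartite_iff)
next
  fix k assume "\<exists>T. CIST_family (complete_bipartite X Y) S T k"
  then obtain T where family: "CIST_family (complete_bipartite X Y) S T k" ..
  have "verts (T i) \<inter> Y \<noteq> {}" if "i < k" for i
  proof -
    have "steiner_tree (complete_bipartite X Y) S (T i)"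
      using family that by (simp add: CIST_family_def)
    from steiner_tree_meets_neighbour[OF this assms(3)] show ?thesis
      using assms(1,2) by (auto simp: edges_complete_bipartite_iff subset_iff)
  qed
  then show "k \<le> card Y"
    using CIST_family_le_card[OF family assms(4)] assms(1,2) by blast
qed

theorem theorem3p1:
  fixes X Y :: "'a set" and m1 m2 :: nat
  assumes "finite X" and "finite Y" and "X \<inter> Y = {}"
    and "card X = m1" and "card Y = m2" and "2 \<le> m1" and "m1 \<le> m2"
  shows "(\<forall>S. S \<subseteq> X \<and> card S \<ge> 2 \<longrightarrow> kappa_star (complete_bipartite X Y) S = m2) \<and>
         (\<forall>S. S \<subseteq> Y \<and> card S \<ge> 2 \<longrightarrow> kappa_star (complete_bipartite X Y) S = m1)"
proof (intro conjI allI impI)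
  fix S assume "S \<subseteq> X \<and> card S \<ge> 2"
  then show "kappa_star (complete_bipartite X Y) S = m2"
    using kappa_star_complete_bipartite[of X Y S] assms by simp
next
  fix S assume "S \<subseteq> Y \<and> card S \<ge> 2"
  then show "kappa_star (complete_bipartite X Y) S = m1"
    using kappa_star_complete_bipartite[of Y X S] assms
    by (simp add: complete_bipartite_commute[of X Y] Int_commute)
qed

end
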